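(* Let $G=(V,E)$ be a finite undirected unweighted simple graph. For $u\in V$ let $\mathcal{F}_{uu}$ be the set of spanning rooted forests of $G$ in which $u$ is a root, and let $$s(u)=\frac{1}{|\mathcal{F}_{uu}|}\sum_{F\in\mathcal{F}_{uu}}|F|_u,$$ where $|F|_u$ is the number of vertices of the tree rooted at $u$ in $F$. Define $\mathrm{ForestSim}(u,v)=\frac{\min(s(u),s(v))}{\max(s(u),s(v))}$ for $u,v\in V$. Then $\mathrm{ForestSim}$ is an admissible role similarity metric, i.e. it satisfies all of: (P1) $\mathrm{ForestSim}(u,v)\in[0,1]$ for all $u,v\in V$; (P2) $\mathrm{ForestSim}(u,v)=\mathrm{ForestSim}(v,u)$ for all $u,v$; (P3) if $u$ and $v$ are automorphically equivalent then $\mathrm{ForestSim}(u,v)=1$; (P4) if $u$ and $u'$ are automorphically equivalent then $\mathrm{ForestSim}(u,v)=\mathrm{ForestSim}(u',v)$ for every $v\in V$; (P5) writing $\mathrm{Dist}(u,v)=1-\mathrm{ForestSim}(u,v)$, one has $\mathrm{Dist}(u,v)\le\mathrm{Dist}(u,u')+\mathrm{Dist}(u',v)$ for all $u,u',v\in V$.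
   Context: A spanning forest of $G$ is an acyclic subgraph containing all vertices of $G$; a spanning rooted forest is a spanning forest with one root marked in each of its trees. An automorphism of $G$ is a bijection $f:V\to V$ such that $(f(u),f(v))\in E$ for every $(u,v)\in E$. Vertices $u,v$ are automorphically equivalent if there is an automorphism $f$ with $f(u)=v$. *)

theory Defs
  imports Complex_Main
begin

definition simple_graph :: "'a set \<Rightarrow> 'a set set \<Rightarrow> bool" where
  "simple_graph V E \<longleftrightarrow> finite V \<and> (\<forall>e\<in>E. e \<subseteq> V \<and> card e = 2)"

definition is_cycle :: "'a set set \<Rightarrow> 'a list \<Rightarrow> bool" where
  "is_cycle F xs \<longleftrightarrow> length xs \<ge> 3 \<and> distinct xs \<and>
     (\<forall>i. Suc i < length xs \<longrightarrow> {xs ! i, xs ! Suc i} \<in> F) \<and> {last xs, hd xs} \<in> F"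

definition acyclic_edges :: "'a set set \<Rightarrow> bool" where
  "acyclic_edges F \<longleftrightarrow> (\<nexists>xs. is_cycle F xs)"

text \<open>Spanning forest of G = (V,E): an acyclic subgraph containing all vertices,
  represented by its edge set (its vertex set is V).\<close>
definition spanning_forest :: "'a set \<Rightarrow> 'a set set \<Rightarrow> 'a set set \<Rightarrow> bool" where
  "spanning_forest V E F \<longleftrightarrow> F \<subseteq> E \<and> acyclic_edges F"

definition adj_rel :: "'a set set \<Rightarrow> ('a \<times> 'a) set" where
  "adj_rel F = {(x, y). {x, y} \<in> F}"

definition tree_of :: "'a set \<Rightarrow> 'a set set \<Rightarrow> 'a \<Rightarrow> 'a set" where
  "tree_of V F x = {y \<in> V. (x, y) \<in> (adj_rel F)\<^sup>*}"

definition spanning_rooted_forest :: "'a set \<Rightarrow> 'a set set \<Rightarrow> 'a set set \<times> 'a set \<Rightarrow> bool" where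
  "spanning_rooted_forest V E FR \<longleftrightarrow> (case FR of (F, R) \<Rightarrow>
     spanning_forest V E F \<and> R \<subseteq> V \<and> (\<forall>x\<in>V. \<exists>!r. r \<in> R \<and> r \<in> tree_of V F x))"

definition forests_rooted_at :: "'a set \<Rightarrow> 'a set set \<Rightarrow> 'a \<Rightarrow> ('a set set \<times> 'a set) set" where
  "forests_rooted_at V E u = {FR. spanning_rooted_forest V E FR \<and> u \<in> snd FR}"

definition forest_s :: "'a set \<Rightarrow> 'a set set \<Rightarrow> 'a \<Rightarrow> real" where
  "forest_s V E u = (\<Sum>FR\<in>forests_rooted_at V E u. real (card (tree_of V (fst FR) u)))
                     / real (card (forests_rooted_at V E u))"

definition ForestSim :: "'a set \<Rightarrow> 'a set set \<Rightarrow> 'a \<Rightarrow> 'a \<Rightarrow> real" where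
  "ForestSim V E u v = min (forest_s V E u) (forest_s V E v) / max (forest_s V E u) (forest_s V E v)"

definition ForestDist :: "'a set \<Rightarrow> 'a set set \<Rightarrow> 'a \<Rightarrow> 'a \<Rightarrow> real" where
  "ForestDist V E u v = 1 - ForestSim V E u v"

definition automorphism :: "'a set \<Rightarrow> 'a set set \<Rightarrow> ('a \<Rightarrow> 'a) \<Rightarrow> bool" where
  "automorphism V E f \<longleftrightarrow> bij_betw f V V \<and> (\<forall>x y. {x, y} \<in> E \<longrightarrow> {f x, f y} \<in> E)"

definition auto_equiv :: "'a set \<Rightarrow> 'a set set \<Rightarrow> 'a \<Rightarrow> 'a \<Rightarrow> bool" where
  "auto_equiv V E u v \<longleftrightarrow> (\<exists>f. automorphism V E f \<and> f u = v)"

end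

theory Submission
  imports Defs
begin

text \<open>An injection f of the vertex set transports spanning rooted forests, (F, R) \<mapsto> (f F, f R),
  bijectively onto those of the image graph, sending the forests in which u is a root to those in
  which f u is a root and preserving the size of the tree of the root.  For an automorphism the
  image graph is G itself, so s(f u) = s(u).  Since every tree contains its root and the edgeless
  forest lies in \<F>_uu, s(u) \<ge> 1.  Properties (P1)--(P4) then follow from the definition of ForestSim,
  and (P5) is the triangle inequality for d(a, b) = 1 - min(a, b) / max(a, b) on positive reals:
  for x \<le> y \<le> z one has d(x, y) + d(y, z) - d(x, z) = d(x, y) d(y, z) \<ge> 0.\<close>

lemma one_minus_div_triangle_sorted:
  fixes x y z :: real
  assumes "0 < x" "x \<le> y" "y \<le> z"
  shows "1 - x / z \<le> (1 - x / y) + (1 - y / z)"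
proof -
  have "(1 - x / y) + (1 - y / z) - (1 - x / z) = (1 - x / y) * (1 - y / z)"
    using assms by (simp add: field_simps)
  moreover have "0 \<le> (1 - x / y) * (1 - y / z)"
    using assms by simp
  ultimately show ?thesis by linarith
qed

lemma min_div_max_dist_triangle:
  fixes a b c :: real
  assumes "0 < a" "0 < b" "0 < c"
  shows "1 - min a c / max a c \<le> (1 - min a b / max a b) + (1 - min b c / max b c)"
  using assms(1,3)
proof (induction a c rule: linorder_wlog)
  case (le a c)
  consider "b \<le> a" | "a \<le> b" "b \<le> c" | "c \<le> b" by linarith
  then show ?case
  proof cases
    case 1
    have "b / c \<le> a / c" "b / a \<le> 1" using 1 le assms(2) by (simp_all add: divide_right_mono)
    then have "1 - a / c \<le> (1 - b / a) + (1 - b / c)" by linarith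
    then show ?thesis using 1 le by (simp add: min_def max_def)
  next
    case 2
    then show ?thesis using one_minus_div_triangle_sorted[of a b c] le by (simp add: min_def max_def)
  next
    case 3
    have "a / b \<le> a / c" "c / b \<le> 1" using 3 le assms(2) by (simp_all add: divide_left_mono)
    then have "1 - a / c \<le> (1 - a / b) + (1 - c / b)" by linarith
    then show ?thesis using 3 le by (simp add: min_def max_def)
  qed
next
  case (sym a c)
  then show ?case by (simp add: min.commute max.commute)
qed

abbreviation map_edges :: "('a \<Rightarrow> 'b) \<Rightarrow> 'a set set \<Rightarrow> 'b set set" where
  "map_edges f F \<equiv> (`) f ` F"

lemma map_edges_cancel:
  assumes "\<And>x. x \<in> \<Union>F \<Longrightarrow> g (f x) = x"
  shows "map_edges g (map_edges f F) = F"
proof -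
  have "g ` f ` e = e" if "e \<in> F" for e
    using that assms by (force simp: image_image)
  then show ?thesis by (force simp: image_image)
qed

lemma map_edges_inv_into:
  assumes "inj_on f V" "\<Union>F \<subseteq> V"
  shows "map_edges (inv_into V f) (map_edges f F) = F"
  using assms by (intro map_edges_cancel) (auto intro: inv_into_f_f)

lemma rtrancl_adj_rel_map_edges:
  assumes "(x, y) \<in> (adj_rel F)\<^sup>*"
  shows "(f x, f y) \<in> (adj_rel (map_edges f F))\<^sup>*"
  using assms
proof (induction rule: rtrancl_induct)
  case (step y z)
  then have "(f y, f z) \<in> adj_rel (map_edges f F)"
    by (auto simp: adj_rel_def intro: rev_image_eqI)
  with step.IH show ?case by (rule rtrancl_into_rtrancl)
qed simp

lemma is_cycle_map_edges:
  assumes "is_cycle F xs" "inj_on f (set xs)"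
  shows "is_cycle (map_edges f F) (map f xs)"
proof -
  have "xs \<noteq> []" using assms(1) by (auto simp: is_cycle_def)
  with assms show ?thesis
    by (auto simp: is_cycle_def distinct_map last_map hd_map intro: rev_image_eqI)
qed

lemma set_cycle_subset_Union:
  assumes "is_cycle F xs"
  shows "set xs \<subseteq> \<Union>F"
proof
  fix x assume "x \<in> set xs"
  then obtain i where i: "i < length xs" "x = xs ! i" by (auto simp: in_set_conv_nth)
  show "x \<in> \<Union>F"
  proof (cases "Suc i < length xs")
    case True
    then have "{xs ! i, xs ! Suc i} \<in> F" using assms by (auto simp: is_cycle_def)
    then show ?thesis using i by auto
  next
    case False
    then have "i = length xs - 1" "xs \<noteq> []" using i by auto
    then have "x = last xs" using i by (simp add: last_conv_nth)
    moreover have "{last xs, hd xs} \<in> F" using assms by (auto simp: is_cycle_def)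
    ultimately show ?thesis by auto
  qed
qed

lemma acyclic_edges_map_edges:
  assumes "inj_on f V" "\<Union>F \<subseteq> V" "acyclic_edges F"
  shows "acyclic_edges (map_edges f F)"
  unfolding acyclic_edges_def
proof
  assume "\<exists>xs. is_cycle (map_edges f F) xs"
  then obtain xs where xs: "is_cycle (map_edges f F) xs" by blast
  let ?g = "inv_into V f"
  have "set xs \<subseteq> f ` V" using set_cycle_subset_Union[OF xs] assms(2) by blast
  then have "inj_on ?g (set xs)" using inj_on_inv_into inj_on_subset by blast
  then have "is_cycle (map_edges ?g (map_edges f F)) (map ?g xs)" by (rule is_cycle_map_edges[OF xs])
  then have "is_cycle F (map ?g xs)" by (simp only: map_edges_inv_into[OF assms(1,2)])
  with assms(3) show False by (auto simp: acyclic_edges_def)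
qed

lemma tree_of_subset: "tree_of V F x \<subseteq> V"
  by (auto simp: tree_of_def)

lemma tree_of_map_edges:
  assumes "inj_on f V" "\<Union>F \<subseteq> V" "x \<in> V"
  shows "tree_of (f ` V) (map_edges f F) (f x) = f ` tree_of V F x"
proof
  show "f ` tree_of V F x \<subseteq> tree_of (f ` V) (map_edges f F) (f x)"
    by (auto simp: tree_of_def intro: rtrancl_adj_rel_map_edges)
next
  show "tree_of (f ` V) (map_edges f F) (f x) \<subseteq> f ` tree_of V F x"
  proof
    fix y assume "y \<in> tree_of (f ` V) (map_edges f F) (f x)"
    then have y: "y \<in> f ` V" "(f x, y) \<in> (adj_rel (map_edges f F))\<^sup>*"
      by (auto simp: tree_of_def)
    let ?g = "inv_into V f"
    have "(?g (f x), ?g y) \<in> (adj_rel F)\<^sup>*"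
      using rtrancl_adj_rel_map_edges[OF y(2), of ?g] by (simp add: map_edges_inv_into[OF assms(1,2)])
    then have "?g y \<in> tree_of V F x"
      using assms(1,3) y(1) by (auto simp: tree_of_def inv_into_into)
    moreover have "y = f (?g y)" using y(1) by (simp add: f_inv_into_f)
    ultimately show "y \<in> f ` tree_of V F x" by blast
  qed
qed

lemma spanning_rooted_forest_subsets:
  "spanning_rooted_forest V E (F, R) \<Longrightarrow> F \<subseteq> E \<and> R \<subseteq> V"
  by (simp add: spanning_rooted_forest_def spanning_forest_def)

lemma spanning_rooted_forest_map_edges:
  assumes f: "inj_on f V" and E: "\<Union>E \<subseteq> V" and FR: "spanning_rooted_forest V E (F, R)"
  shows "spanning_rooted_forest (f ` V) (map_edges f E) (map_edges f F, f ` R)"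
proof -
  have F: "F \<subseteq> E" "acyclic_edges F" and R: "R \<subseteq> V"
    and roots: "\<forall>x\<in>V. \<exists>!r. r \<in> R \<and> r \<in> tree_of V F x"
    using FR by (auto simp: spanning_rooted_forest_def spanning_forest_def)
  have "\<exists>!r. r \<in> f ` R \<and> r \<in> tree_of (f ` V) (map_edges f F) x'" if "x' \<in> f ` V" for x'
  proof -
    obtain x where x: "x \<in> V" "x' = f x" using \<open>x' \<in> f ` V\<close> by blast
    obtain r where "R \<inter> tree_of V F x = {r}" using roots x by blast
    moreover have "f ` (R \<inter> tree_of V F x) = f ` R \<inter> f ` tree_of V F x"
      using inj_on_image_Int[OF f R tree_of_subset] .
    moreover have "tree_of (f ` V) (map_edges f F) x' = f ` tree_of V F x"
      using tree_of_map_edges[OF f _ x(1)] F(1) E x(2) by blast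
    ultimately have "f ` R \<inter> tree_of (f ` V) (map_edges f F) x' = {f r}" by simp
    then show ?thesis by (metis Int_iff singleton_iff)
  qed
  moreover have "acyclic_edges (map_edges f F)"
    using acyclic_edges_map_edges[OF f _ F(2)] F(1) E by blast
  ultimately show ?thesis
    using F(1) R by (auto simp: spanning_rooted_forest_def spanning_forest_def)
qed

lemma forests_rooted_at_map_edges:
  assumes f: "inj_on f V" and E: "\<Union>E \<subseteq> V" and u: "u \<in> V"
  shows "forests_rooted_at (f ` V) (map_edges f E) (f u)
    = map_prod (map_edges f) ((`) f) ` forests_rooted_at V E u"
proof
  show "map_prod (map_edges f) ((`) f) ` forests_rooted_at V E u
    \<subseteq> forests_rooted_at (f ` V) (map_edges f E) (f u)"
    using spanning_rooted_forest_map_edges[OF f E] by (auto simp: forests_rooted_at_def)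
next
  show "forests_rooted_at (f ` V) (map_edges f E) (f u)
    \<subseteq> map_prod (map_edges f) ((`) f) ` forests_rooted_at V E u"
  proof
    fix FR' assume FR': "FR' \<in> forests_rooted_at (f ` V) (map_edges f E) (f u)"
    obtain F' R' where FR'_eq: "FR' = (F', R')" by fastforce
    let ?g = "inv_into V f"
    have g: "inj_on ?g (f ` V)" "?g ` f ` V = V" "?g (f u) = u"
      using f u by (auto simp: inj_on_inv_into inv_into_image_cancel)
    have gE: "map_edges ?g (map_edges f E) = E"
      using map_edges_inv_into[OF f E] .
    have sf: "spanning_rooted_forest (f ` V) (map_edges f E) (F', R')" "f u \<in> R'"
      using FR' FR'_eq by (auto simp: forests_rooted_at_def)
    moreover have "\<Union>(map_edges f E) \<subseteq> f ` V" using E by blast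
    ultimately have "spanning_rooted_forest V E (map_edges ?g F', ?g ` R')"
      using spanning_rooted_forest_map_edges[OF g(1)] g(2) gE by metis
    moreover have "u \<in> ?g ` R'" using sf(2) g(3) by (metis imageI)
    moreover have "F' = map_edges f (map_edges ?g F')" "R' = f ` ?g ` R'"
    proof -
      have "F' \<subseteq> map_edges f E" "R' \<subseteq> f ` V"
        using spanning_rooted_forest_subsets[OF sf(1)] by auto
      then have "\<Union>F' \<subseteq> f ` V" "R' \<subseteq> f ` V" using E by blast+
      show "F' = map_edges f (map_edges ?g F')"
        by (rule map_edges_cancel[symmetric]) (use \<open>\<Union>F' \<subseteq> f ` V\<close> in \<open>auto intro: f_inv_into_f\<close>)
      show "R' = f ` ?g ` R'"
        using image_inv_into_cancel[OF refl \<open>R' \<subseteq> f ` V\<close>] by simp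
    qed
    ultimately show "FR' \<in> map_prod (map_edges f) ((`) f) ` forests_rooted_at V E u"
      unfolding FR'_eq forests_rooted_at_def by (auto intro!: image_eqI)
  qed
qed

lemma forest_s_map_edges:
  assumes f: "inj_on f V" and E: "\<Union>E \<subseteq> V" and u: "u \<in> V"
  shows "forest_s (f ` V) (map_edges f E) (f u) = forest_s V E u"
proof -
  let ?\<F> = "forests_rooted_at V E u" and ?g = "inv_into V f"
  have sub: "\<Union>(fst FR) \<subseteq> V" "snd FR \<subseteq> V" if "FR \<in> ?\<F>" for FR
    using that spanning_rooted_forest_subsets[of V E "fst FR" "snd FR"] E
    by (auto simp: forests_rooted_at_def)
  have "inj_on (map_prod (map_edges f) ((`) f)) ?\<F>"
  proof (rule inj_on_inverseI)
    fix FR assume "FR \<in> ?\<F>"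
    then have "map_edges ?g (map_edges f (fst FR)) = fst FR" "?g ` f ` snd FR = snd FR"
      using f sub[of FR] by (auto simp: map_edges_inv_into inv_into_image_cancel)
    then show "map_prod (map_edges ?g) ((`) ?g) (map_prod (map_edges f) ((`) f) FR) = FR"
      by (cases FR) simp
  qed
  moreover have "card (tree_of (f ` V) (map_edges f (fst FR)) (f u)) = card (tree_of V (fst FR) u)"
    if "FR \<in> ?\<F>" for FR
    using tree_of_map_edges[OF f sub(1)[OF that] u] card_image[OF inj_on_subset[OF f tree_of_subset]]
    by simp
  ultimately show ?thesis
    unfolding forest_s_def forests_rooted_at_map_edges[OF f E u]
    by (simp add: sum.reindex card_image)
qed

lemma simple_graph_Union_edges: "simple_graph V E \<Longrightarrow> \<Union>E \<subseteq> V"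
  by (auto simp: simple_graph_def)

lemma simple_graph_finite_edges: "simple_graph V E \<Longrightarrow> finite E"
  by (meson Pow_iff finite_Pow_iff finite_subset simple_graph_def subsetI)

lemma automorphism_map_edges:
  assumes G: "simple_graph V E" and f: "automorphism V E f"
  shows "map_edges f E = E"
proof (rule endo_inj_surj[OF simple_graph_finite_edges[OF G]])
  show "map_edges f E \<subseteq> E"
  proof
    fix e' assume "e' \<in> map_edges f E"
    then obtain e where e: "e \<in> E" "e' = f ` e" by blast
    then obtain a b where "e = {a, b}" using G by (auto simp: simple_graph_def card_2_iff)
    then show "e' \<in> E" using e f by (auto simp: automorphism_def)
  qed
  show "inj_on ((`) f) E"
  proof (rule inj_onI)
    fix e1 e2 assume "e1 \<in> E" "e2 \<in> E" "f ` e1 = f ` e2"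
    moreover have "inj_on f V" using f by (auto simp: automorphism_def bij_betw_def)
    ultimately show "e1 = e2"
      using inj_on_image_eq_iff simple_graph_Union_edges[OF G] by (metis Sup_le_iff)
  qed
qed

lemma forest_s_automorphism:
  assumes G: "simple_graph V E" and f: "automorphism V E f" and u: "u \<in> V"
  shows "forest_s V E (f u) = forest_s V E u"
proof -
  have "inj_on f V" "f ` V = V" using f by (auto simp: automorphism_def bij_betw_def)
  then show ?thesis
    using forest_s_map_edges[OF _ simple_graph_Union_edges[OF G] u] automorphism_map_edges[OF G f]
    by metis
qed

lemma finite_forests_rooted_at:
  assumes "simple_graph V E"
  shows "finite (forests_rooted_at V E u)"
proof (rule finite_subset)
  show "forests_rooted_at V E u \<subseteq> Pow E \<times> Pow V"
    by (auto simp: forests_rooted_at_def spanning_rooted_forest_def spanning_forest_def)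
  show "finite (Pow E \<times> Pow V)"
    using assms simple_graph_finite_edges by (auto simp: simple_graph_def)
qed

lemma forest_s_ge_1:
  assumes G: "simple_graph V E" and u: "u \<in> V"
  shows "1 \<le> forest_s V E u"
proof -
  let ?\<F> = "forests_rooted_at V E u"
  have "tree_of V {} x = {x}" if "x \<in> V" for x
    using that by (auto simp: tree_of_def adj_rel_def)
  then have "({}, V) \<in> ?\<F>"
    using u by (auto simp: forests_rooted_at_def spanning_rooted_forest_def spanning_forest_def
        acyclic_edges_def is_cycle_def)
  then have "0 < card ?\<F>"
    using finite_forests_rooted_at[OF G] card_gt_0_iff by blast
  moreover have "1 \<le> card (tree_of V (fst FR) u)" for FR
  proof -
    have "finite (tree_of V (fst FR) u)"
      using G finite_subset[OF tree_of_subset] by (auto simp: simple_graph_def)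
    moreover have "u \<in> tree_of V (fst FR) u" using u by (simp add: tree_of_def)
    ultimately show ?thesis by (metis Suc_leI card_gt_0_iff empty_iff One_nat_def)
  qed
  then have "(\<Sum>FR\<in>?\<F>. 1) \<le> (\<Sum>FR\<in>?\<F>. real (card (tree_of V (fst FR) u)))"
    by (intro sum_mono) simp
  ultimately show ?thesis by (simp add: forest_s_def)
qed

theorem theorem4p6:
  fixes V :: "'a set" and E :: "'a set set"
  assumes "simple_graph V E"
  shows "(\<forall>u\<in>V. \<forall>v\<in>V. 0 \<le> ForestSim V E u v \<and> ForestSim V E u v \<le> 1)
    \<and> (\<forall>u\<in>V. \<forall>v\<in>V. ForestSim V E u v = ForestSim V E v u)
    \<and> (\<forall>u\<in>V. \<forall>v\<in>V. auto_equiv V E u v \<longrightarrow> ForestSim V E u v = 1)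
    \<and> (\<forall>u\<in>V. \<forall>u'\<in>V. \<forall>v\<in>V. auto_equiv V E u u' \<longrightarrow> ForestSim V E u v = ForestSim V E u' v)
    \<and> (\<forall>u\<in>V. \<forall>u'\<in>V. \<forall>v\<in>V. ForestDist V E u v \<le> ForestDist V E u u' + ForestDist V E u' v)"
proof -
  have pos: "0 < forest_s V E u" if "u \<in> V" for u
    using forest_s_ge_1[OF assms that] by linarith
  have equiv: "forest_s V E v = forest_s V E u" if "u \<in> V" "auto_equiv V E u v" for u v
    using that forest_s_automorphism[OF assms] by (auto simp: auto_equiv_def)
  show ?thesis
  proof (intro conjI ballI impI)
    fix u v assume u: "u \<in> V" and v: "v \<in> V"
    have su: "0 < forest_s V E u" and "0 < forest_s V E v"
      using pos[OF u] pos[OF v] .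
    then show "0 \<le> ForestSim V E u v" "ForestSim V E u v \<le> 1"
      by (auto simp: ForestSim_def min_def max_def)
    show "ForestSim V E u v = ForestSim V E v u"
      by (simp add: ForestSim_def min.commute max.commute)
    assume "auto_equiv V E u v"
    then show "ForestSim V E u v = 1"
      using equiv[OF u] su by (simp add: ForestSim_def)
  next
    fix u u' v assume "u \<in> V" "auto_equiv V E u u'"
    then show "ForestSim V E u v = ForestSim V E u' v"
      using equiv by (simp add: ForestSim_def)
  next
    fix u u' v assume "u \<in> V" "u' \<in> V" "v \<in> V"
    then show "ForestDist V E u v \<le> ForestDist V E u u' + ForestDist V E u' v"
      using min_div_max_dist_triangle pos by (simp add: ForestDist_def ForestSim_def)
  qed
qed

end
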